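(* Let $G$ be a graph, let $\langle \mathcal{P}, T\rangle$ be a VPT representation of $G$, let $C$ be a clique of $G$ and let $q\in V(T)$ with $C=C_q$. If $d_T(q)=h$, then the branch graph $B(G/C)$ is $h$-colorable.
   Context: All graphs are finite, simple and connected. A clique is a maximal complete set of vertices. A VPT representation $\langle \mathcal{P},T\rangle$ of a graph $G$ is a family $\mathcal{P}=(P_v)_{v\in V(G)}$ of subpaths of a tree $T$ such that two distinct vertices $v,v'$ of $G$ are adjacent iff $P_v$ and $P_{v'}$ share at least one vertex. For $q\in V(T)$, $C_q=\{v\in V(G): q\in V(P_v)\}$. For a clique $C$ of $G$, the branch graph $B(G/C)$ has vertex set the vertices of $V(G)\setminus C$ adjacent to some vertex of $C$, and two such vertices $v,w$ are adjacent in $B(G/C)$ iff (1) $vw\notin E(G)$; (2) some vertex of $C$ is adjacent to both $v$ and $w$; and (3) there exist $v',w'\in C$ with $v'$ adjacent to $v$ but not to $w$, and $w'$ adjacent to $w$ but not to $v$. A graph is $k$-colorable if its vertices can be colored with at most $k$ colors so that adjacent vertices get different colors. *)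

theory Defs
  imports Main
begin

definition simple_graph :: "'a set \<Rightarrow> ('a \<Rightarrow> 'a \<Rightarrow> bool) \<Rightarrow> bool" where
  "simple_graph V E \<longleftrightarrow>
     (\<forall>x y. E x y \<longrightarrow> x \<in> V \<and> y \<in> V) \<and>
     (\<forall>x y. E x y \<longrightarrow> E y x) \<and>
     (\<forall>x. \<not> E x x)"

definition connected_graph :: "'a set \<Rightarrow> ('a \<Rightarrow> 'a \<Rightarrow> bool) \<Rightarrow> bool" where
  "connected_graph V E \<longleftrightarrow> V \<noteq> {} \<and>
     (\<forall>x\<in>V. \<forall>y\<in>V. (\<lambda>u w. u \<in> V \<and> w \<in> V \<and> E u w)\<^sup>*\<^sup>* x y)"

definition fin_conn_graph :: "'a set \<Rightarrow> ('a \<Rightarrow> 'a \<Rightarrow> bool) \<Rightarrow> bool" where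
  "fin_conn_graph V E \<longleftrightarrow> finite V \<and> simple_graph V E \<and> connected_graph V E"

definition is_path :: "'b set \<Rightarrow> ('b \<Rightarrow> 'b \<Rightarrow> bool) \<Rightarrow> 'b list \<Rightarrow> bool" where
  "is_path VT ET ps \<longleftrightarrow> ps \<noteq> [] \<and> distinct ps \<and> set ps \<subseteq> VT \<and>
     (\<forall>i. Suc i < length ps \<longrightarrow> ET (ps ! i) (ps ! Suc i))"

definition is_cycle :: "'b set \<Rightarrow> ('b \<Rightarrow> 'b \<Rightarrow> bool) \<Rightarrow> 'b list \<Rightarrow> bool" where
  "is_cycle VT ET cs \<longleftrightarrow> length cs \<ge> 3 \<and> is_path VT ET cs \<and> ET (last cs) (hd cs)"

definition is_tree :: "'b set \<Rightarrow> ('b \<Rightarrow> 'b \<Rightarrow> bool) \<Rightarrow> bool" where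
  "is_tree VT ET \<longleftrightarrow> fin_conn_graph VT ET \<and> (\<nexists>cs. is_cycle VT ET cs)"

definition degree :: "'b set \<Rightarrow> ('b \<Rightarrow> 'b \<Rightarrow> bool) \<Rightarrow> 'b \<Rightarrow> nat" where
  "degree VT ET q = card {r \<in> VT. ET q r}"

definition VPT_rep :: "'a set \<Rightarrow> ('a \<Rightarrow> 'a \<Rightarrow> bool) \<Rightarrow> ('a \<Rightarrow> 'b list) \<Rightarrow>
    'b set \<Rightarrow> ('b \<Rightarrow> 'b \<Rightarrow> bool) \<Rightarrow> bool" where
  "VPT_rep V E P VT ET \<longleftrightarrow> is_tree VT ET \<and>
     (\<forall>v\<in>V. is_path VT ET (P v)) \<and>
     (\<forall>v\<in>V. \<forall>v'\<in>V. v \<noteq> v' \<longrightarrow> (E v v' \<longleftrightarrow> set (P v) \<inter> set (P v') \<noteq> {}))"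

definition Cq :: "'a set \<Rightarrow> ('a \<Rightarrow> 'b list) \<Rightarrow> 'b \<Rightarrow> 'a set" where
  "Cq V P q = {v \<in> V. q \<in> set (P v)}"

definition complete_set :: "'a set \<Rightarrow> ('a \<Rightarrow> 'a \<Rightarrow> bool) \<Rightarrow> 'a set \<Rightarrow> bool" where
  "complete_set V E K \<longleftrightarrow> K \<subseteq> V \<and> (\<forall>x\<in>K. \<forall>y\<in>K. x \<noteq> y \<longrightarrow> E x y)"

definition is_clique :: "'a set \<Rightarrow> ('a \<Rightarrow> 'a \<Rightarrow> bool) \<Rightarrow> 'a set \<Rightarrow> bool" where
  "is_clique V E C \<longleftrightarrow> complete_set V E C \<and>
     (\<forall>K. complete_set V E K \<and> C \<subseteq> K \<longrightarrow> K = C)"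

definition branch_vertices :: "'a set \<Rightarrow> ('a \<Rightarrow> 'a \<Rightarrow> bool) \<Rightarrow> 'a set \<Rightarrow> 'a set" where
  "branch_vertices V E C = {v \<in> V - C. \<exists>c\<in>C. E v c}"

definition branch_edge :: "'a set \<Rightarrow> ('a \<Rightarrow> 'a \<Rightarrow> bool) \<Rightarrow> 'a set \<Rightarrow> 'a \<Rightarrow> 'a \<Rightarrow> bool" where
  "branch_edge V E C v w \<longleftrightarrow>
     v \<in> branch_vertices V E C \<and> w \<in> branch_vertices V E C \<and>
     \<not> E v w \<and>
     (\<exists>c\<in>C. E c v \<and> E c w) \<and>
     (\<exists>v'\<in>C. \<exists>w'\<in>C. E v' v \<and> \<not> E v' w \<and> E w' w \<and> \<not> E w' v)"

definition k_colorable :: "'a set \<Rightarrow> ('a \<Rightarrow> 'a \<Rightarrow> bool) \<Rightarrow> nat \<Rightarrow> bool" where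
  "k_colorable V E k \<longleftrightarrow> (\<exists>f :: 'a \<Rightarrow> nat.
     (\<forall>v\<in>V. f v < k) \<and> (\<forall>v\<in>V. \<forall>w\<in>V. E v w \<longrightarrow> f v \<noteq> f w))"

end

theory Submission
  imports Defs
begin

(* Idea (following the paper): every vertex v of B(G/C) is outside C, so its path
   P_v avoids q and lies inside one component of T - q.  These components
   correspond to the h = deg(q) neighbours of q, and we colour v by the neighbour
   of q leading to P_v.  It remains to show that B-adjacent vertices v, w get
   different colours: a common neighbour c in C has a path through q meeting the
   disjoint paths P_v and P_w, and the witnesses v', w' in C of condition (3) show
   that P_v and P_w cannot be reached from q along the same side of P_c. *)

lemma is_path_iff:
  "is_path VT ET ps \<longleftrightarrow> ps \<noteq> [] \<and> distinct ps \<and> set ps \<subseteq> VT \<and> successively ET ps"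
  by (auto simp: is_path_def successively_conv_nth)

lemma is_path_rev:
  assumes "\<And>x y. ET x y \<Longrightarrow> ET y x" and "is_path VT ET ps"
  shows "is_path VT ET (rev ps)"
  using assms by (auto simp: is_path_iff successively_rev intro: successively_mono)

lemma is_path_take: "is_path VT ET ps \<Longrightarrow> 0 < n \<Longrightarrow> is_path VT ET (take n ps)"
  unfolding is_path_iff
  by (metis append_take_drop_id distinct_take in_set_takeD subset_code(1)
      successively_append_iff take_eq_Nil neq0_conv)

lemma is_path_prefix:
  assumes "is_path VT ET ps" "k < length ps"
  shows "is_path VT ET (take (Suc k) ps)" "hd (take (Suc k) ps) = hd ps"
    "last (take (Suc k) ps) = ps ! k"
proof -
  show "is_path VT ET (take (Suc k) ps)" using is_path_take[OF assms(1)] by simp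
  show "hd (take (Suc k) ps) = hd ps" by (cases ps) simp_all
  show "last (take (Suc k) ps) = ps ! k" using assms(2) by (simp add: take_Suc_conv_app_nth)
qed

lemma is_path_drop: "is_path VT ET ps \<Longrightarrow> n < length ps \<Longrightarrow> is_path VT ET (drop n ps)"
  unfolding is_path_iff
  by (metis append_take_drop_id distinct_drop drop_eq_Nil in_set_dropD not_le subset_code(1)
      successively_append_iff)

lemma is_path_length_ge2: "is_path VT ET ps \<Longrightarrow> u \<in> set ps \<Longrightarrow> u \<noteq> hd ps \<Longrightarrow> 2 \<le> length ps"
  by (cases ps; cases "tl ps") (auto simp: is_path_iff)

lemma first_hit:
  assumes "x \<in> set xs" "x \<in> S"
  obtains k where "k < length xs" "xs ! k \<in> S" "set (take k xs) \<inter> S = {}"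
  using assms
proof (induction xs arbitrary: thesis)
  case Nil thus ?case by simp
next
  case (Cons a xs)
  show ?case
  proof (cases "a \<in> S")
    case True thus ?thesis using Cons.prems(1)[of 0] by simp
  next
    case False
    then obtain k where "k < length xs" "xs ! k \<in> S" "set (take k xs) \<inter> S = {}"
      using Cons by auto
    thus ?thesis using False Cons.prems(1)[of "Suc k"] by simp
  qed
qed

lemma is_path_glue:
  assumes xs: "is_path VT ET xs" and ys: "is_path VT ET ys"
    and join: "last xs = hd ys" and disj: "set xs \<inter> set ys \<subseteq> {hd ys}"
  shows "is_path VT ET (xs @ tl ys)"
proof -
  obtain y ys' where ys_eq: "ys = y # ys'" using ys by (cases ys) (auto simp: is_path_iff)
  have "ys' \<noteq> [] \<Longrightarrow> ET (last xs) (hd ys')"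
    using ys join by (auto simp: ys_eq is_path_iff successively_Cons)
  moreover have "set xs \<inter> set ys' = {}" using ys disj by (auto simp: ys_eq is_path_iff)
  ultimately show ?thesis
    using xs ys by (auto simp: ys_eq is_path_iff successively_append_iff successively_Cons)
qed

lemma last_glue: "last xs = hd ys \<Longrightarrow> ys \<noteq> [] \<Longrightarrow> last (xs @ tl ys) = last ys"
  by (cases ys; cases "tl ys") auto

lemma subpath_between:
  assumes sym: "\<And>x y. ET x y \<Longrightarrow> ET y x" and ps: "is_path VT ET ps"
    and x: "x \<in> set ps" and y: "y \<in> set ps"
  shows "\<exists>r. is_path VT ET r \<and> hd r = x \<and> last r = y \<and> set r \<subseteq> set ps"
proof -
  have forward: "\<exists>r. is_path VT ET r \<and> hd r = ps ! i \<and> last r = ps ! j \<and> set r \<subseteq> set ps"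
    if "i \<le> j" "j < length ps" for i j
  proof (intro exI conjI)
    let ?r = "drop i (take (Suc j) ps)"
    show "is_path VT ET ?r" using that is_path_drop[OF is_path_take[OF ps]] by simp
    show "hd ?r = ps ! i" using that by (simp add: hd_drop_conv_nth)
    show "last ?r = ps ! j" using that by (simp add: last_drop take_Suc_conv_app_nth)
    show "set ?r \<subseteq> set ps" by (meson in_set_dropD in_set_takeD subsetI)
  qed
  obtain i j where "i < length ps" "ps ! i = x" "j < length ps" "ps ! j = y"
    using x y by (auto simp: in_set_conv_nth)
  moreover have "\<exists>r. is_path VT ET r \<and> hd r = ps ! i \<and> last r = ps ! j \<and> set r \<subseteq> set ps"
  proof (cases "i \<le> j")
    case True thus ?thesis using forward \<open>j < length ps\<close> by blast
  next
    case False
    then obtain r where "is_path VT ET r" "hd r = ps ! j" "last r = ps ! i" "set r \<subseteq> set ps"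
      using forward[of j i] \<open>i < length ps\<close> by auto
    thus ?thesis using is_path_rev[OF sym] by (intro exI[of _ "rev r"]) (auto simp: hd_rev last_rev)
  qed
  ultimately show ?thesis by blast
qed

(* Reachability in the graph yields a path (shortcut repeated vertices). *)
lemma path_of_walk:
  assumes "(\<lambda>u w. u \<in> VT \<and> w \<in> VT \<and> ET u w)\<^sup>*\<^sup>* x y" "x \<in> VT"
  shows "\<exists>ps. is_path VT ET ps \<and> hd ps = x \<and> last ps = y"
  using assms(1)
proof (induction rule: rtranclp_induct)
  case base thus ?case using assms(2) by (intro exI[of _ "[x]"]) (simp add: is_path_iff)
next
  case (step y z)
  then obtain ps where ps: "is_path VT ET ps" "hd ps = x" "last ps = y" by blast
  show ?case
  proof (cases "z \<in> set ps")
    case True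
    then obtain k where "k < length ps" "ps ! k = z" by (auto simp: in_set_conv_nth)
    thus ?thesis using ps is_path_prefix[OF ps(1)] by (intro exI[of _ "take (Suc k) ps"]) simp
  next
    case False
    have "is_path VT ET (ps @ [z])" using ps step False
      by (auto simp: is_path_iff successively_append_iff)
    thus ?thesis using ps by (intro exI[of _ "ps @ [z]"]) (auto simp: is_path_iff)
  qed
qed

(* Two paths leaving a common vertex a through different neighbours and ending
   at the same vertex close a cycle: follow the first one up to the first vertex
   it shares with the second, then return along the second. *)
lemma diverging_paths_cycle:
  assumes sym: "\<And>x y. ET x y \<Longrightarrow> ET y x"
    and pA: "is_path VT ET (a # A)" and pB: "is_path VT ET (a # B)"
    and ne: "A \<noteq> []" "B \<noteq> []" and diverge: "hd A \<noteq> hd B" and meet: "last A = last B"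
  shows "\<exists>cs. is_cycle VT ET cs"
proof -
  have A: "is_path VT ET A" and B: "is_path VT ET B"
    using is_path_drop[OF pA, of 1] is_path_drop[OF pB, of 1] ne by simp_all
  obtain m where m: "m < length A" "A ! m \<in> set B" and first: "set (take m A) \<inter> set B = {}"
    using first_hit[of "last A" A "set B"] ne meet by (metis last_in_set)
  obtain n where n: "n < length B" "B ! n = A ! m" using m(2) by (auto simp: in_set_conv_nth)
  define X where "X = a # take (Suc m) A"
  define Y where "Y = rev (take (Suc n) B)"
  have X: "is_path VT ET X" "last X = A ! m"
    using is_path_take[OF pA, of "Suc (Suc m)"] m by (simp_all add: X_def take_Suc_conv_app_nth)
  have Y: "is_path VT ET Y" "hd Y = A ! m" "last Y = hd B"
    using is_path_rev[OF sym is_path_take[OF B, of "Suc n"]] n ne(2)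
    by (auto simp: Y_def hd_rev last_rev take_Suc_conv_app_nth hd_conv_nth)
  have "a \<notin> set B" using pB by (simp add: is_path_iff)
  hence "set X \<inter> set Y \<subseteq> {hd Y}"
    using first m(1) Y(2) by (auto simp: X_def Y_def take_Suc_conv_app_nth dest: in_set_takeD)
  hence path: "is_path VT ET (X @ tl Y)" using is_path_glue X Y by metis
  have "m \<noteq> 0 \<or> n \<noteq> 0" using n diverge ne by (metis hd_conv_nth)
  hence "3 \<le> length (X @ tl Y)" using m n by (simp add: X_def Y_def) linarith
  moreover have "ET (last (X @ tl Y)) (hd (X @ tl Y))"
    using last_glue[of X Y] X Y pB ne sym by (auto simp: X_def is_path_iff successively_Cons)
  ultimately have "is_cycle VT ET (X @ tl Y)" using path by (simp only: is_cycle_def)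
  thus ?thesis ..
qed

lemma acyclic_path_unique:
  assumes sym: "\<And>x y. ET x y \<Longrightarrow> ET y x" and acyclic: "\<nexists>cs. is_cycle VT ET cs"
  shows "is_path VT ET ps \<Longrightarrow> is_path VT ET qs \<Longrightarrow> hd ps = hd qs \<Longrightarrow> last ps = last qs \<Longrightarrow> ps = qs"
proof (induction ps arbitrary: qs)
  case Nil thus ?case by (simp add: is_path_iff)
next
  case (Cons a A)
  obtain B where qs: "qs = a # B" using Cons.prems by (cases qs) (auto simp: is_path_iff)
  have "A = [] \<longleftrightarrow> B = []"
    using Cons.prems qs by (auto simp: is_path_iff) (metis last_in_set)+
  moreover have "A = B" if "A \<noteq> []" "B \<noteq> []"
  proof -
    have "last A = last B" using Cons.prems qs that by simp
    moreover have "hd A = hd B"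
    proof (rule ccontr)
      assume "hd A \<noteq> hd B"
      moreover have "is_path VT ET (a # B)" using Cons.prems(2) qs by simp
      ultimately show False
        using diverging_paths_cycle[OF sym Cons.prems(1)] that acyclic \<open>last A = last B\<close> by blast
    qed
    ultimately show ?thesis
      using Cons.IH is_path_drop[OF Cons.prems(1), of 1] is_path_drop[OF Cons.prems(2), of 1] qs that
      by simp
  qed
  ultimately show ?case using qs by blast
qed

lemma tree_sym: "is_tree VT ET \<Longrightarrow> ET x y \<Longrightarrow> ET y x"
  by (simp add: is_tree_def fin_conn_graph_def simple_graph_def)

(* In a tree, connectivity gives a path between any two vertices and acyclicity
   makes it unique; \<open>tree_path VT ET a b\<close> denotes this path. *)
definition tree_path :: "'b set \<Rightarrow> ('b \<Rightarrow> 'b \<Rightarrow> bool) \<Rightarrow> 'b \<Rightarrow> 'b \<Rightarrow> 'b list" where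
  "tree_path VT ET a b = (THE ps. is_path VT ET ps \<and> hd ps = a \<and> last ps = b)"

lemma tree_path_eq:
  assumes T: "is_tree VT ET" and ps: "is_path VT ET ps" "hd ps = a" "last ps = b"
  shows "tree_path VT ET a b = ps"
  unfolding tree_path_def
proof (rule the_equality)
  fix qs assume "is_path VT ET qs \<and> hd qs = a \<and> last qs = b"
  thus "qs = ps"
    using acyclic_path_unique[of ET VT qs ps] tree_sym[OF T] T ps by (auto simp: is_tree_def)
qed (use ps in simp)

lemma tree_path:
  assumes T: "is_tree VT ET" and ab: "a \<in> VT" "b \<in> VT"
  shows "is_path VT ET (tree_path VT ET a b) \<and> hd (tree_path VT ET a b) = a
    \<and> last (tree_path VT ET a b) = b"
proof -
  have "connected_graph VT ET" using T by (simp add: is_tree_def fin_conn_graph_def)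
  hence "(\<lambda>u w. u \<in> VT \<and> w \<in> VT \<and> ET u w)\<^sup>*\<^sup>* a b"
    using ab unfolding connected_graph_def by blast
  from path_of_walk[OF this ab(1)] obtain ps where "is_path VT ET ps" "hd ps = a" "last ps = b"
    by blast
  thus ?thesis using tree_path_eq[OF T] by simp
qed

(* The branch of x at q: the neighbour of q through which the tree path from q
   to x leaves q.  The components of T - q are the classes of this map. *)
definition branch :: "'b set \<Rightarrow> ('b \<Rightarrow> 'b \<Rightarrow> bool) \<Rightarrow> 'b \<Rightarrow> 'b \<Rightarrow> 'b" where
  "branch VT ET q x = tree_path VT ET q x ! 1"

lemma branch_via_path:
  assumes T: "is_tree VT ET" and ps: "is_path VT ET ps" "hd ps = q"
    and x: "x \<in> set ps" "x \<noteq> q"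
  shows "branch VT ET q x = ps ! 1"
proof -
  obtain j where j: "j < length ps" "ps ! j = x" using x by (auto simp: in_set_conv_nth)
  have "ps ! 0 = q" using ps by (simp add: hd_conv_nth is_path_iff)
  hence "0 < j" using j x(2) by (cases j) auto
  have "tree_path VT ET q x = take (Suc j) ps"
    using tree_path_eq[OF T is_path_prefix[OF ps(1) j(1)]] ps j by simp
  thus ?thesis using \<open>0 < j\<close> by (simp add: branch_def)
qed

lemma branch_neighbour:
  assumes T: "is_tree VT ET" and q: "q \<in> VT" and x: "x \<in> VT" "x \<noteq> q"
  shows "branch VT ET q x \<in> VT \<and> ET q (branch VT ET q x)"
proof -
  let ?ps = "tree_path VT ET q x"
  have ps: "is_path VT ET ?ps" "hd ?ps = q" "last ?ps = x" using tree_path[OF T q x(1)] by auto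
  have "x \<in> set ?ps" using ps(1,3) last_in_set[of ?ps] by (simp add: is_path_iff)
  hence len: "Suc 0 < length ?ps" using is_path_length_ge2[OF ps(1)] ps(2) x(2) by fastforce
  hence "ET (?ps ! 0) (?ps ! Suc 0)" using ps(1) unfolding is_path_def by blast
  moreover have "?ps ! Suc 0 \<in> VT" using ps(1) len nth_mem[of "Suc 0" ?ps] unfolding is_path_iff by blast
  moreover have "?ps ! 0 = q" using ps(1,2) by (simp add: is_path_iff hd_conv_nth)
  ultimately show ?thesis by (simp add: branch_def)
qed

lemma branch_eq_of_edge:
  assumes T: "is_tree VT ET" and q: "q \<in> VT"
    and x: "x \<in> VT" "x \<noteq> q" and y: "y \<noteq> q" and xy: "ET x y"
  shows "branch VT ET q y = branch VT ET q x"
proof -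
  let ?ps = "tree_path VT ET q x"
  have ps: "is_path VT ET ?ps" "hd ?ps = q" "last ?ps = x" using tree_path[OF T q x(1)] by auto
  have x_in: "x \<in> set ?ps" using ps by (metis is_path_iff last_in_set)
  show ?thesis
  proof (cases "y \<in> set ?ps")
    case True thus ?thesis using branch_via_path[OF T ps(1,2)] x_in x y by simp
  next
    case False
    have "y \<in> VT" using xy T by (auto simp: is_tree_def fin_conn_graph_def simple_graph_def)
    hence ext: "is_path VT ET (?ps @ [y])" using ps xy False
      by (auto simp: is_path_iff successively_append_iff)
    have "hd (?ps @ [y]) = q" using ps by (simp add: is_path_iff)
    moreover have "x \<in> set (?ps @ [y])" "y \<in> set (?ps @ [y])" using x_in by simp_all
    ultimately show ?thesis using branch_via_path[OF T ext] x(2) y by presburger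
  qed
qed

lemma branch_constant_on_path:
  assumes T: "is_tree VT ET" and q: "q \<in> VT" and ps: "is_path VT ET ps" "q \<notin> set ps"
    and x: "x \<in> set ps"
  shows "branch VT ET q x = branch VT ET q (hd ps)"
proof -
  have "branch VT ET q (ps ! i) = branch VT ET q (ps ! 0)" if "i < length ps" for i
    using that
  proof (induction i)
    case (Suc i)
    have "ps ! i \<in> set ps" "ps ! Suc i \<in> set ps"
      using nth_mem[of i ps] nth_mem[of "Suc i" ps] Suc.prems by simp_all
    hence "ps ! i \<in> VT" "ps ! i \<noteq> q" "ps ! Suc i \<noteq> q" using ps unfolding is_path_iff by auto
    moreover have "ET (ps ! i) (ps ! Suc i)" using ps(1) Suc.prems unfolding is_path_def by blast
    ultimately have "branch VT ET q (ps ! Suc i) = branch VT ET q (ps ! i)"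
      by (rule branch_eq_of_edge[OF T q])
    thus ?case using Suc by simp
  qed simp
  moreover obtain i where "i < length ps" "x = ps ! i" using x by (auto simp: in_set_conv_nth)
  moreover have "hd ps = ps ! 0" using ps(1) by (simp add: is_path_iff hd_conv_nth)
  ultimately show ?thesis by simp
qed

lemma branch_split_at:
  assumes T: "is_tree VT ET" and ps: "is_path VT ET ps" and i: "i < length ps" "ps ! i = q"
    and u: "u \<in> set (drop i ps)" "u \<noteq> q" and w: "w \<in> set (take (Suc i) ps)" "w \<noteq> q"
  shows "branch VT ET q u \<noteq> branch VT ET q w"
proof -
  let ?R = "drop i ps" and ?L = "rev (take (Suc i) ps)"
  have R: "is_path VT ET ?R" "hd ?R = q" using is_path_drop[OF ps i(1)] i by (auto simp: hd_drop_conv_nth)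
  have L: "is_path VT ET ?L" "hd ?L = q"
    using is_path_rev[OF tree_sym[OF T]] is_path_prefix[OF ps i(1)] i by (auto simp: hd_rev)
  have lenR: "2 \<le> length ?R" using is_path_length_ge2[OF R(1) u(1)] R u by auto
  have "2 \<le> length ?L" using is_path_length_ge2[OF L(1)] L w by auto
  hence "?L ! 1 = ps ! (i - 1)" using i(1) by (simp add: rev_nth)
  hence branch_w: "branch VT ET q w = ps ! (i - 1)" using branch_via_path[OF T L] w by simp
  have branch_u: "branch VT ET q u = ps ! Suc i" using branch_via_path[OF T R u] lenR by simp
  have "Suc i < length ps" "i - 1 < length ps" "Suc i \<noteq> i - 1" using lenR i(1) by auto
  hence "ps ! Suc i \<noteq> ps ! (i - 1)" using ps by (simp add: is_path_iff nth_eq_iff_index_eq)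
  thus ?thesis using branch_u branch_w by simp
qed

(* Let ps start at q and first meet the path pw at position k.  Its initial
   segment up to that contact is the tree path from q to pw, so every path b
   through q meeting pw contains it: glue the segment with a sub-path of pw to
   get the tree path from q to a common vertex of b and pw, which lies in b. *)
lemma path_to_first_contact:
  assumes T: "is_tree VT ET" and ps: "is_path VT ET ps" "hd ps = q"
    and pw: "is_path VT ET pw" and k: "k < length ps" "ps ! k \<in> set pw"
    and first: "set (take k ps) \<inter> set pw = {}"
    and b: "is_path VT ET b" "q \<in> set b" "set b \<inter> set pw \<noteq> {}"
  shows "set (take (Suc k) ps) \<subseteq> set b"
proof -
  have sym: "\<And>x y. ET x y \<Longrightarrow> ET y x" using tree_sym[OF T] .
  obtain z where z: "z \<in> set b" "z \<in> set pw" using b(3) by blast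
  obtain r where r: "is_path VT ET r" "hd r = ps ! k" "last r = z" "set r \<subseteq> set pw"
    using subpath_between[OF sym pw k(2) z(2)] by blast
  obtain s where s: "is_path VT ET s" "hd s = q" "last s = z" "set s \<subseteq> set b"
    using subpath_between[OF sym b(1,2) z(1)] by blast
  let ?seg = "take (Suc k) ps"
  have seg: "is_path VT ET ?seg" "hd ?seg = q" "last ?seg = ps ! k"
    using is_path_prefix[OF ps(1) k(1)] ps(2) by simp_all
  have "set ?seg \<inter> set r \<subseteq> {hd r}"
    using first r(2,4) k(1) by (auto simp: take_Suc_conv_app_nth)
  hence glued: "is_path VT ET (?seg @ tl r)" using is_path_glue[OF seg(1) r(1)] seg(3) r(2) by simp
  have "last (?seg @ tl r) = z" using last_glue[of ?seg r] seg(3) r(1-3) by (simp add: is_path_iff)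
  moreover have "hd (?seg @ tl r) = q" using seg(2) k(1) by (cases ps) simp_all
  ultimately have "?seg @ tl r = s"
    using tree_path_eq[OF T glued] tree_path_eq[OF T s(1-3)] by simp
  thus ?thesis using s(4) by auto
qed

(* A path ps starting at q cannot meet two disjoint paths pv, pw if there are
   paths through q meeting exactly one of pv, pw each: whichever of pv, pw the
   path ps meets first would be contained in the path reaching only the other. *)
lemma no_common_side:
  assumes T: "is_tree VT ET" and ps: "is_path VT ET ps" "hd ps = q"
    and pv: "is_path VT ET pv" and pw: "is_path VT ET pw" and disj: "set pv \<inter> set pw = {}"
    and meet_v: "set ps \<inter> set pv \<noteq> {}" and meet_w: "set ps \<inter> set pw \<noteq> {}"
    and a: "is_path VT ET a" "q \<in> set a" "set a \<inter> set pv \<noteq> {}" "set a \<inter> set pw = {}"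
    and b: "is_path VT ET b" "q \<in> set b" "set b \<inter> set pw \<noteq> {}" "set b \<inter> set pv = {}"
  shows False
proof -
  obtain j where j: "j < length ps" "ps ! j \<in> set pv" "set (take j ps) \<inter> set pv = {}"
    using meet_v first_hit[of _ ps "set pv"] by blast
  obtain k where k: "k < length ps" "ps ! k \<in> set pw" "set (take k ps) \<inter> set pw = {}"
    using meet_w first_hit[of _ ps "set pw"] by blast
  have "j \<noteq> k" using j k disj by auto
  thus False
  proof (cases "j < k")
    case True
    hence "ps ! j \<in> set (take (Suc k) ps)" using nth_mem[of j "take (Suc k) ps"] k(1) by simp
    thus False using path_to_first_contact[OF T ps pw k b(1-3)] j(2) b(4) by blast
  next
    case False
    hence "ps ! k \<in> set (take (Suc j) ps)" using nth_mem[of k "take (Suc j) ps"] j(1) by simp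
    thus False using path_to_first_contact[OF T ps pv j a(1-3)] k(2) a(4) by blast
  qed
qed

(* Split
   pc at q into two halves starting at q; if pv and pw are met in different
   halves they lie in different branches, and meeting them in the same half is
   excluded by \<open>no_common_side\<close>. *)
lemma separated_paths_distinct_branches:
  assumes T: "is_tree VT ET" and pc: "is_path VT ET pc" "q \<in> set pc"
    and pv: "is_path VT ET pv" "q \<notin> set pv" and pw: "is_path VT ET pw" "q \<notin> set pw"
    and disj: "set pv \<inter> set pw = {}"
    and meet_v: "set pc \<inter> set pv \<noteq> {}" and meet_w: "set pc \<inter> set pw \<noteq> {}"
    and a: "is_path VT ET a" "q \<in> set a" "set a \<inter> set pv \<noteq> {}" "set a \<inter> set pw = {}"
    and b: "is_path VT ET b" "q \<in> set b" "set b \<inter> set pw \<noteq> {}" "set b \<inter> set pv = {}"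
  shows "branch VT ET q (hd pv) \<noteq> branch VT ET q (hd pw)"
proof
  assume same: "branch VT ET q (hd pv) = branch VT ET q (hd pw)"
  have "set pc \<subseteq> VT" using pc(1) by (simp add: is_path_iff)
  hence q: "q \<in> VT" using pc(2) by blast
  obtain i where i: "i < length pc" "pc ! i = q" using pc(2) by (auto simp: in_set_conv_nth)
  let ?R = "drop i pc" and ?L = "rev (take (Suc i) pc)"
  have R: "is_path VT ET ?R" "hd ?R = q" using is_path_drop[OF pc(1) i(1)] i by (auto simp: hd_drop_conv_nth)
  have L: "is_path VT ET ?L" "hd ?L = q"
    using is_path_rev[OF tree_sym[OF T]] is_path_prefix[OF pc(1) i(1)] i by (auto simp: hd_rev)
  have "set pc = set (take i pc) \<union> set ?R" by (metis append_take_drop_id set_append)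
  moreover have "set (take i pc) \<subseteq> set (take (Suc i) pc)" by (rule set_take_subset_set_take) simp
  moreover have "set (take (Suc i) pc) \<subseteq> set pc" by (rule set_take_subset)
  ultimately have halves: "set pc = set ?R \<union> set ?L" by auto
  obtain x where x: "x \<in> set pc" "x \<in> set pv" using meet_v by blast
  obtain y where y: "y \<in> set pc" "y \<in> set pw" using meet_w by blast
  have xq: "x \<noteq> q" and yq: "y \<noteq> q" using x y pv(2) pw(2) by auto
  have "branch VT ET q x = branch VT ET q y"
    using same branch_constant_on_path[OF T q pv x(2)] branch_constant_on_path[OF T q pw y(2)]
    by simp
  hence "\<not> (x \<in> set ?R \<and> y \<in> set ?L)" "\<not> (y \<in> set ?R \<and> x \<in> set ?L)"
    using branch_split_at[OF T pc(1) i _ xq _ yq] branch_split_at[OF T pc(1) i _ yq _ xq] by auto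
  hence "x \<in> set ?R \<and> y \<in> set ?R \<or> x \<in> set ?L \<and> y \<in> set ?L" using halves x(1) y(1) by blast
  thus False
  proof
    assume "x \<in> set ?R \<and> y \<in> set ?R"
    hence "x \<in> set ?R \<inter> set pv" "y \<in> set ?R \<inter> set pw" using x(2) y(2) by simp_all
    hence "set ?R \<inter> set pv \<noteq> {}" "set ?R \<inter> set pw \<noteq> {}" by auto
    thus False by (rule no_common_side[OF T R pv(1) pw(1) disj _ _ a b])
  next
    assume "x \<in> set ?L \<and> y \<in> set ?L"
    hence "x \<in> set ?L \<inter> set pv" "y \<in> set ?L \<inter> set pw" using x(2) y(2) by simp_all
    hence "set ?L \<inter> set pv \<noteq> {}" "set ?L \<inter> set pw \<noteq> {}" by auto
    thus False by (rule no_common_side[OF T L pv(1) pw(1) disj _ _ a b])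
  qed
qed

lemma k_colorable_by_map:
  assumes fin: "finite N" and card: "card N = k"
    and into: "\<And>v. v \<in> V \<Longrightarrow> f v \<in> N"
    and proper: "\<And>v w. v \<in> V \<Longrightarrow> w \<in> V \<Longrightarrow> E v w \<Longrightarrow> f v \<noteq> f w"
  shows "k_colorable V E k"
proof -
  obtain idx where idx: "bij_betw idx N {0..<k}" using ex_bij_betw_finite_nat[OF fin] card by blast
  have "idx (f v) < k" if "v \<in> V" for v
    using bij_betwE[OF idx] into[OF that] by simp
  moreover have "idx (f v) \<noteq> idx (f w)" if "v \<in> V" "w \<in> V" "E v w" for v w
    using bij_betw_imp_inj_on[OF idx] into that proper[OF that] by (simp add: inj_on_eq_iff)
  ultimately show ?thesis unfolding k_colorable_def by (intro exI[of _ "idx \<circ> f"]) simp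
qed

(* In a VPT representation with C = C_q, adjacent vertices of the branch graph
   have their paths in different branches at q: a common neighbour c in C and the
   witnesses v', w' of condition (3) supply the paths required above. *)
lemma branch_edge_distinct_branches:
  assumes rep: "VPT_rep V E P VT ET" and C: "C = Cq V P q" and vw: "branch_edge V E C v w"
  shows "branch VT ET q (hd (P v)) \<noteq> branch VT ET q (hd (P w))"
proof -
  have T: "is_tree VT ET" and path: "\<And>u. u \<in> V \<Longrightarrow> is_path VT ET (P u)"
    and meet: "\<And>u u'. u \<in> V \<Longrightarrow> u' \<in> V \<Longrightarrow> u \<noteq> u' \<Longrightarrow> E u u' \<longleftrightarrow> set (P u) \<inter> set (P u') \<noteq> {}"
    using rep unfolding VPT_rep_def by blast+
  have inC: "u \<in> C \<longleftrightarrow> u \<in> V \<and> q \<in> set (P u)" for u using C by (simp add: Cq_def)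
  obtain c v' w' where v: "v \<in> V" "v \<notin> C" and w: "w \<in> V" "w \<notin> C" and vw_non: "\<not> E v w"
    and c: "c \<in> C" "E c v" "E c w" and v': "v' \<in> C" "E v' v" "\<not> E v' w"
    and w': "w' \<in> C" "E w' w" "\<not> E w' v"
    using vw unfolding branch_edge_def branch_vertices_def by blast
  have "v \<noteq> w" using v' by auto
  have c_in: "c \<in> V" "q \<in> set (P c)" and v'_in: "v' \<in> V" "q \<in> set (P v')"
    and w'_in: "w' \<in> V" "q \<in> set (P w')" using c(1) v'(1) w'(1) inC by auto
  have "q \<notin> set (P v)" "q \<notin> set (P w)" using v w inC by auto
  moreover have "set (P v) \<inter> set (P w) = {}" using meet[OF v(1) w(1) \<open>v \<noteq> w\<close>] vw_non by blast
  moreover have "set (P c) \<inter> set (P v) \<noteq> {}" "set (P c) \<inter> set (P w) \<noteq> {}"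
    using meet[OF c_in(1) v(1)] meet[OF c_in(1) w(1)] c v w by auto
  moreover have "set (P v') \<inter> set (P v) \<noteq> {}" "set (P v') \<inter> set (P w) = {}"
    using meet[OF v'_in(1) v(1)] meet[OF v'_in(1) w(1)] v' v w by auto
  moreover have "set (P w') \<inter> set (P w) \<noteq> {}" "set (P w') \<inter> set (P v) = {}"
    using meet[OF w'_in(1) w(1)] meet[OF w'_in(1) v(1)] w' v w by auto
  ultimately show ?thesis
    using separated_paths_distinct_branches[OF T path[OF c_in(1)] c_in(2) path[OF v(1)] _ path[OF w(1)]]
      path[OF v'_in(1)] v'_in(2) path[OF w'_in(1)] w'_in(2) by blast
qed

(* Colour each vertex of B(G/C) by the branch at q containing its path; there
   are deg(q) branches. *)
theorem mainTheorem2: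
  fixes V :: "'a set" and E :: "'a \<Rightarrow> 'a \<Rightarrow> bool"
    and VT :: "'b set" and ET :: "'b \<Rightarrow> 'b \<Rightarrow> bool"
    and P :: "'a \<Rightarrow> 'b list" and C :: "'a set" and q :: 'b and h :: nat
  assumes "fin_conn_graph V E"
    and "VPT_rep V E P VT ET"
    and "is_clique V E C"
    and "q \<in> VT"
    and "C = Cq V P q"
    and "degree VT ET q = h"
  shows "k_colorable (branch_vertices V E C) (branch_edge V E C) h"
proof (rule k_colorable_by_map)
  have T: "is_tree VT ET" using assms(2) by (simp add: VPT_rep_def)
  show "finite {r \<in> VT. ET q r}" using T by (simp add: is_tree_def fin_conn_graph_def)
  show "card {r \<in> VT. ET q r} = h" using assms(6) by (simp add: degree_def)
  show "branch VT ET q (hd (P v)) \<in> {r \<in> VT. ET q r}" if "v \<in> branch_vertices V E C" for v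
  proof -
    have "v \<in> V" "q \<notin> set (P v)" using that assms(5) by (auto simp: branch_vertices_def Cq_def)
    moreover have "is_path VT ET (P v)" using \<open>v \<in> V\<close> assms(2) by (simp add: VPT_rep_def)
    ultimately have "hd (P v) \<in> VT" "hd (P v) \<noteq> q" by (auto simp: is_path_iff)
    thus ?thesis using branch_neighbour[OF T assms(4)] by simp
  qed
  show "branch VT ET q (hd (P v)) \<noteq> branch VT ET q (hd (P w))" if "branch_edge V E C v w" for v w
    using branch_edge_distinct_branches[OF assms(2,5) that] .
qed

end
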